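(* Let $q=p^h$ with $p>3$ prime, let $X,T$ be positive integers, and let $\mathcal{E}$ be an elliptic curve over $\mathbb{F}_q$ with affine equation $y^2=f(x)$, $\deg f=3$; let $\gamma=\#\{z\in\mathbb{F}_q: f(z)=0\}$. Define $$\mathcal{R}^{\mathcal{X}}_{\max}=\frac{L^{\mathcal{X}}}{L^{\mathcal{X}}+X+T},\quad L^{\mathcal{X}}=\left\lfloor\frac{q-(X+T)}{2}\right\rfloor,$$ $$\mathcal{R}^{\mathcal{E}}_{\max}=\frac{L^{\mathcal{E}}}{L^{\mathcal{E}}+X+T+8},\quad L^{\mathcal{E}}=2\left\lfloor\frac{\#\mathcal{E}(\mathbb{F}_q)-(X+T+\gamma+9)}{4}\right\rfloor-1.$$ If $\#\mathcal{E}(\mathbb{F}_q)\ge q\left(1+\frac{8}{X+T}\right)+\gamma+7$, then $\mathcal{R}^{\mathcal{E}}_{\max}>\mathcal{R}^{\mathcal{X}}_{\max}$.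
   Context: $\mathcal{R}^{\mathcal{X}}_{\max}$ is the largest rate of the known XSTPIR construction from rational curves over $\mathbb{F}_q$ (which gives, whenever $2L+X+T\le q$, an $X$-secure $T$-private PIR scheme with $N=L+X+T$ servers and rate $L/N$), and $\mathcal{R}^{\mathcal{E}}_{\max}$ is the largest rate of the known construction from the elliptic curve $\mathcal{E}$ (rate $L/N$, $N=L+X+T+8$, $L$ odd, requiring $\#\mathcal{E}(\mathbb{F}_q)\ge 2L+X+T+11+\gamma$); the explicit formulas above are these maxima. *)

theory Defs
  imports "HOL-Computational_Algebra.Computational_Algebra"
begin

text \<open>Elliptic curve y^2 = f(x) over a finite field 'a, with f of degree 3 and
 without repeated roots (nonsingularity; char > 3).\<close>
definition elliptic_cubic :: "'a::field poly \<Rightarrow> bool" where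
  "elliptic_cubic f \<longleftrightarrow> degree f = 3 \<and> coprime f (pderiv f)"

text \<open>Number of F_q-rational points: affine solutions plus the point at infinity.\<close>
definition num_points :: "'a::{field,finite} poly \<Rightarrow> nat" where
  "num_points f = card {(x, y). y ^ 2 = poly f x} + 1"

definition num_roots :: "'a::{field,finite} poly \<Rightarrow> nat" where
  "num_roots f = card {z. poly f z = 0}"

definition L_X :: "nat \<Rightarrow> nat \<Rightarrow> nat \<Rightarrow> int" where
  "L_X q X T = \<lfloor>(real q - real (X + T)) / 2\<rfloor>"

definition R_X_max :: "nat \<Rightarrow> nat \<Rightarrow> nat \<Rightarrow> real" where
  "R_X_max q X T = real_of_int (L_X q X T) / (real_of_int (L_X q X T) + real (X + T))"

definition L_E :: "nat \<Rightarrow> nat \<Rightarrow> nat \<Rightarrow> nat \<Rightarrow> int" where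
  "L_E N \<gamma> X T = 2 * \<lfloor>(real N - real (X + T + \<gamma> + 9)) / 4\<rfloor> - 1"

definition R_E_max :: "nat \<Rightarrow> nat \<Rightarrow> nat \<Rightarrow> nat \<Rightarrow> real" where
  "R_E_max N \<gamma> X T = real_of_int (L_E N \<gamma> X T) / (real_of_int (L_E N \<gamma> X T) + real (X + T + 8))"

end

theory Submission
  imports Defs
begin

text \<open>Only the counting hypothesis matters: with \<open>S = X + T\<close>, it says
  \<open>S (N - S - \<gamma> - 15) \<ge> (S + 8) (q - S)\<close>, and the floors in \<open>L\<^sup>X\<close> and \<open>L\<^sup>E\<close> lose
  just enough that \<open>2 L\<^sup>X \<le> q - S\<close> and \<open>2 L\<^sup>E > N - S - \<gamma> - 15\<close>. Cross-multiplying
  the two rates then reduces the claim to \<open>(S + 8) L\<^sup>X < S L\<^sup>E\<close>.\<close>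

lemma mult_floor_divide_le:
  fixes x n :: real
  assumes "n > 0"
  shows "n * of_int \<lfloor>x / n\<rfloor> \<le> x"
  using of_int_floor_le[of "x / n"] assms by (simp add: le_divide_eq mult.commute)

lemma mult_floor_divide_gt:
  fixes x n :: real
  assumes "n > 0"
  shows "x - n < n * of_int \<lfloor>x / n\<rfloor>"
  using real_of_int_floor_gt_diff_one[of "x / n"] assms by (simp add: field_simps)

lemma divide_add_less_divide_add_iff:
  fixes a b s t :: real
  assumes "0 < a + s" and "0 < b + t"
  shows "a / (a + s) < b / (b + t) \<longleftrightarrow> a * t < b * s"
proof -
  have "a / (a + s) < b / (b + t) \<longleftrightarrow> a * (b + t) < b * (a + s)"
    using assms by (simp add: divide_simps)
  also have "\<dots> \<longleftrightarrow> a * t < b * s"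
    by (simp add: algebra_simps)
  finally show ?thesis .
qed

lemma L_X_bounds:
  "2 * real_of_int (L_X q X T) \<le> real q - real (X + T)"
  "real q - real (X + T) - 2 < 2 * real_of_int (L_X q X T)"
  unfolding L_X_def
  using mult_floor_divide_le[of 2] mult_floor_divide_gt[of 2] by simp_all

lemma L_E_lower_bound:
  "real N - real (X + T) - real \<gamma> - 15 < 2 * real_of_int (L_E N \<gamma> X T)"
  unfolding L_E_def
  using mult_floor_divide_gt[of 4 "real N - real (X + T + \<gamma> + 9)"] by simp

lemma R_X_max_less_R_E_max:
  assumes "X + T > 0" and "q \<ge> 1"
    and N: "real N \<ge> real q * (1 + 8 / real (X + T)) + real \<gamma> + 7"
  shows "R_X_max q X T < R_E_max N \<gamma> X T"
proof -
  define S where "S = real (X + T)"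
  define a where "a = real_of_int (L_X q X T)"
  define b where "b = real_of_int (L_E N \<gamma> X T)"
  have "S \<ge> 1"
    using assms(1) unfolding S_def by linarith
  then have "S > 0"
    by simp
  have "real q \<ge> 1"
    using assms(2) by simp
  have a_le: "2 * a \<le> real q - S" and a_gt: "real q - S - 2 < 2 * a"
    using L_X_bounds unfolding a_def S_def by simp_all
  have b_gt: "real N - S - real \<gamma> - 15 < 2 * b"
    using L_E_lower_bound unfolding b_def S_def by simp
  have SN: "S * real N \<ge> real q * (S + 8) + S * (real \<gamma> + 7)"
    using N \<open>S > 0\<close> unfolding S_def[symmetric] by (simp add: field_simps)
  have "real q * (8 / S) \<ge> 0"
    using \<open>S > 0\<close> by simp
  then have "real N \<ge> real q + real \<gamma> + 7"
    using N unfolding S_def[symmetric] by (simp add: algebra_simps)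
  then have pos: "0 < a + S" "0 < b + (S + 8)"
    using a_gt b_gt \<open>S \<ge> 1\<close> \<open>real q \<ge> 1\<close> by linarith+
  have "(S + 8) * (2 * a) \<le> (S + 8) * (real q - S)"
    using a_le \<open>S > 0\<close> by simp
  also have "\<dots> \<le> S * (real N - S - real \<gamma> - 15)"
    using SN by (simp add: algebra_simps)
  also have "\<dots> < S * (2 * b)"
    using b_gt \<open>S > 0\<close> by simp
  finally have "a * (S + 8) < b * S"
    by (simp add: algebra_simps)
  then show ?thesis
    unfolding R_X_max_def R_E_max_def a_def[symmetric] b_def[symmetric]
    using divide_add_less_divide_add_iff[OF pos] by (simp add: S_def add.assoc)
qed

theorem proposition4p2:
  fixes f :: "'a::{field,finite} poly" and p h q X T :: nat
  assumes "prime p" and "p > 3" and "q = card (UNIV :: 'a set)" and "q = p ^ h"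
    and "X > 0" and "T > 0"
    and "elliptic_cubic f"
    and "real (num_points f) \<ge> real q * (1 + 8 / real (X + T)) + real (num_roots f) + 7"
  shows "R_E_max (num_points f) (num_roots f) X T > R_X_max q X T"
proof -
  have "q \<ge> 1"
    using assms(3) finite_UNIV_card_ge_0[where 'a = 'a] by simp
  then show ?thesis
    using R_X_max_less_R_E_max assms(5,8) by simp
qed

end
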